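(* Let $f,g$ satisfy the standing assumptions below and let $\beta>0$. If $(x,y)\in\mathcal{M}$ is a first-order stationary point of (CDB), then $(x,y)$ is a first-order stationary point of (BLO). Furthermore, when $f$ is Clarke regular, for any $(x,y)\in\mathcal{M}$, $(x,y)$ is a first-order stationary point of (BLO) if and only if it is a first-order stationary point of (CDB).
   Context: Standing assumptions. (A1) Constants $M_f,\mu,L_g,Q_g>0$ exist such that: $f:\mathbb{R}^n\times\mathbb{R}^p\to\mathbb{R}$ is $M_f$-Lipschitz; $g$ is twice differentiable with $\nabla^2_{yy}g\succeq\mu I_p$; $\nabla g$ is $L_g$-Lipschitz; $\nabla^2_{yy}g,\nabla^2_{xy}g$ are $Q_g$-Lipschitz; $\nabla^2_{yy}g$ is continuously differentiable ($\nabla^2_{xy}g\in\mathbb{R}^{n\times p}$ has entries $\partial^2g/\partial x_i\partial y_j$). (A2) $f$ is a potential function of a conservative field $\mathcal{D}_f$ with compact convex values of norm at most $M_f$. Notation: $\mathcal{A}(x,y):=y-\nabla^2_{yy}g(x,y)^{-1}\nabla_yg(x,y)$; $h(x,y):=f(x,\mathcal{A}(x,y))+\frac\beta2\|\nabla_yg(x,y)\|^2$; $\mathcal{M}:=\{(x,y):\nabla_yg(x,y)=0\}$; $\partial$ = Clarke subdifferential. A first-order stationary point of (CDB) is $(x,y)$ with $0\in\partial h(x,y)$. A first-order stationary point of (BLO) (the problem $\min f(x,y)$ s.t. $y=\arg\min_{y'}g(x,y')$) is $(x,y)$ for which there is $(d_x,d_y)\in\partial f(x,y)$ with $d_x-\nabla^2_{xy}g(x,y)\nabla^2_{yy}g(x,y)^{-1}d_y=0$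 and $\nabla_yg(x,y)=0$. *)

theory Defs
  imports "HOL-Analysis.Analysis"
begin

definition grad :: "('a::euclidean_space \<Rightarrow> real) \<Rightarrow> 'a \<Rightarrow> 'a" where
  "grad F z = (SOME v. (F has_derivative (\<lambda>h. v \<bullet> h)) (at z))"

definition hess :: "('a::euclidean_space \<Rightarrow> real) \<Rightarrow> 'a \<Rightarrow> 'a \<Rightarrow> 'a" where
  "hess F z = (SOME L. (grad F has_derivative L) (at z))"

definition grad_x :: "((real^'n) \<times> (real^'p) \<Rightarrow> real) \<Rightarrow> (real^'n) \<times> (real^'p) \<Rightarrow> real^'n" where
  "grad_x F z = fst (grad F z)"

definition grad_y :: "((real^'n) \<times> (real^'p) \<Rightarrow> real) \<Rightarrow> (real^'n) \<times> (real^'p) \<Rightarrow> real^'p" where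
  "grad_y F z = snd (grad F z)"

text \<open>hess_yy F z \$ i \$ j = d^2 F / dy_j dy_i\<close>
definition hess_yy :: "((real^'n) \<times> (real^'p) \<Rightarrow> real) \<Rightarrow> (real^'n) \<times> (real^'p) \<Rightarrow> real^'p^'p" where
  "hess_yy F z = (\<chi> i j. snd (hess F z (0, axis j 1)) $ i)"

text \<open>hess_xy F z \$ i \$ j = d^2 F / dx_i dy_j  (an n x p matrix)\<close>
definition hess_xy :: "((real^'n) \<times> (real^'p) \<Rightarrow> real) \<Rightarrow> (real^'n) \<times> (real^'p) \<Rightarrow> real^'p^'n" where
  "hess_xy F z = (\<chi> i j. snd (hess F z (axis i 1, 0)) $ j)"

definition clarke_dd :: "('a::real_normed_vector \<Rightarrow> real) \<Rightarrow> 'a \<Rightarrow> 'a \<Rightarrow> ereal" where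
  "clarke_dd F z v =
     Limsup (nhds z \<times>\<^sub>F at_right (0::real)) (\<lambda>(w, t). ereal ((F (w + t *\<^sub>R v) - F w) / t))"

definition clarke_subdiff :: "('a::real_inner \<Rightarrow> real) \<Rightarrow> 'a \<Rightarrow> 'a set" where
  "clarke_subdiff F z = {\<xi>. \<forall>v. ereal (\<xi> \<bullet> v) \<le> clarke_dd F z v}"

definition clarke_regular_at :: "('a::real_normed_vector \<Rightarrow> real) \<Rightarrow> 'a \<Rightarrow> bool" where
  "clarke_regular_at F z \<longleftrightarrow>
     (\<forall>v. \<exists>d. ((\<lambda>t. (F (z + t *\<^sub>R v) - F z) / t) \<longlongrightarrow> d) (at_right 0)
              \<and> clarke_dd F z v = ereal d)"

definition clarke_regular :: "('a::real_normed_vector \<Rightarrow> real) \<Rightarrow> bool" where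
  "clarke_regular F \<longleftrightarrow> (\<forall>z. clarke_regular_at F z)"

definition abs_cont_curve :: "(real \<Rightarrow> 'a::real_normed_vector) \<Rightarrow> bool" where
  "abs_cont_curve \<gamma> \<longleftrightarrow>
     (\<forall>\<epsilon>>0. \<exists>\<delta>>0. \<forall>(m::nat) a b.
        (\<forall>i<m. 0 \<le> a i \<and> a i \<le> b i \<and> b i \<le> 1) \<and>
        (\<forall>i<m. \<forall>j<m. i \<noteq> j \<longrightarrow> b i \<le> a j \<or> b j \<le> a i) \<and>
        (\<Sum>i<m. b i - a i) < \<delta>
        \<longrightarrow> (\<Sum>i<m. norm (\<gamma> (b i) - \<gamma> (a i))) < \<epsilon>)"

text \<open>Conservative field D with potential F (Bolte--Pauwels): closed graph,
  nonempty compact values, and the integral formula along every absolutely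
  continuous curve.\<close>

definition conservative_potential ::
    "('a::euclidean_space \<Rightarrow> 'a set) \<Rightarrow> ('a \<Rightarrow> real) \<Rightarrow> bool" where
  "conservative_potential D F \<longleftrightarrow>
     closed {(z, v). v \<in> D z} \<and>
     (\<forall>z. D z \<noteq> {} \<and> compact (D z)) \<and>
     (\<forall>\<gamma>. abs_cont_curve \<gamma> \<longrightarrow>
        ((\<lambda>t. Sup ((\<lambda>v. vector_derivative \<gamma> (at t) \<bullet> v) ` D (\<gamma> t)))
           has_integral (F (\<gamma> 1) - F (\<gamma> 0))) {0..1})"

definition A_map :: "((real^'n) \<times> (real^'p) \<Rightarrow> real) \<Rightarrow> (real^'n) \<times> (real^'p) \<Rightarrow> real^'p" where
  "A_map g z = snd z - matrix_inv (hess_yy g z) *v grad_y g z"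

definition h_fun :: "((real^'n) \<times> (real^'p) \<Rightarrow> real) \<Rightarrow> ((real^'n) \<times> (real^'p) \<Rightarrow> real) \<Rightarrow> real
                       \<Rightarrow> (real^'n) \<times> (real^'p) \<Rightarrow> real" where
  "h_fun f g \<beta> z = f (fst z, A_map g z) + \<beta> / 2 * (norm (grad_y g z))\<^sup>2"

definition M_set :: "((real^'n) \<times> (real^'p) \<Rightarrow> real) \<Rightarrow> ((real^'n) \<times> (real^'p)) set" where
  "M_set g = {z. grad_y g z = 0}"

definition CDB_stationary where
  "CDB_stationary f g \<beta> z \<longleftrightarrow> 0 \<in> clarke_subdiff (h_fun f g \<beta>) z"

definition BLO_stationary ::
    "((real^'n) \<times> (real^'p) \<Rightarrow> real) \<Rightarrow> ((real^'n) \<times> (real^'p) \<Rightarrow> real) \<Rightarrow> (real^'n) \<times> (real^'p) \<Rightarrow> bool" where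
  "BLO_stationary f g z \<longleftrightarrow>
     (\<exists>d \<in> clarke_subdiff f z.
        fst d - hess_xy g z *v (matrix_inv (hess_yy g z) *v snd d) = 0) \<and>
     grad_y g z = 0"

end

theory Submission
  imports Defs
begin

(*
  At a point z of M the merit function is h = f o Phi + (beta/2) |grad_y g|^2 with
  Phi(x, y) = (x, A(x, y)), and Phi(z) = z. In every direction v, Phi is strictly differentiable
  at z with derivative J v = (v_x, - (grad_yy g)^-1 grad_yx g v_x), while the penalty term, being
  quadratic in the vanishing quantity grad_y g, has strict directional derivative 0. A chain rule
  for the Clarke directional derivative of the Lipschitz function f therefore gives
  h^o(z; v) <= f^o(z; J v), with equality when f is Clarke regular.

  If 0 is a Clarke subgradient of h, the sublinear function f^o(z; .) is nonnegative on the range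
  of J, and a separating hyperplane yields a Clarke subgradient xi of f orthogonal to that range.
  As the Hessian of g is symmetric, the adjoint of J is d |-> d_x - grad_xy g (grad_yy g)^-1 d_y,
  so this orthogonality is BLO stationarity. Conversely, a subgradient d with this expression
  zero gives 0 = d . J v <= f^o(z; J v) = h^o(z; v) for all v.
*)

section \<open>Clarke directional derivative of Lipschitz functions\<close>

lemma Limsup_ereal_le_iff:
  fixes X :: "'a \<Rightarrow> real"
  shows "Limsup F (\<lambda>x. ereal (X x)) \<le> ereal c \<longleftrightarrow> (\<forall>e>0. eventually (\<lambda>x. X x < c + e) F)"
proof -
  have "(\<forall>y>ereal c. eventually (\<lambda>x. ereal (X x) < y) F) \<longleftrightarrow> (\<forall>e>0. eventually (\<lambda>x. X x < c + e) F)"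
  proof
    assume less: "\<forall>y>ereal c. eventually (\<lambda>x. ereal (X x) < y) F"
    show "\<forall>e>0. eventually (\<lambda>x. X x < c + e) F"
    proof (intro allI impI)
      fix e :: real assume "e > 0"
      then have "eventually (\<lambda>x. ereal (X x) < ereal (c + e)) F"
        using less[rule_format, of "ereal (c + e)"] by simp
      then show "eventually (\<lambda>x. X x < c + e) F"
        by (rule eventually_mono) simp
    qed
  next
    assume e: "\<forall>e>0. eventually (\<lambda>x. X x < c + e) F"
    show "\<forall>y>ereal c. eventually (\<lambda>x. ereal (X x) < y) F"
    proof (intro allI impI)
      fix y assume "y > ereal c"
      then show "eventually (\<lambda>x. ereal (X x) < y) F"
        using e[rule_format, of "real_of_ereal y - c"]
        by (cases y) (auto elim: eventually_mono)
    qed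
  qed
  then show ?thesis
    by (simp add: Limsup_le_iff)
qed

definition diff_quotient ::
    "('a::real_normed_vector \<Rightarrow> 'b::real_normed_vector) \<Rightarrow> 'a \<Rightarrow> 'a \<times> real \<Rightarrow> 'b" where
  "diff_quotient F v x = (F (fst x + snd x *\<^sub>R v) - F (fst x)) /\<^sub>R snd x"

lemma diff_quotient_real:
  "diff_quotient F v x = (F (fst x + snd x *\<^sub>R v) - F (fst x)) / snd x" for F :: "_ \<Rightarrow> real"
  by (simp add: diff_quotient_def divide_inverse mult.commute)

lemma clarke_dd_diff_quotient:
  "clarke_dd F z v = Limsup (nhds z \<times>\<^sub>F at_right 0) (\<lambda>x. ereal (diff_quotient F v x))"
  unfolding clarke_dd_def diff_quotient_real by (simp add: case_prod_unfold)

lemma eventually_snd_pos: "eventually (\<lambda>x. 0 < snd x) (nhds z \<times>\<^sub>F at_right (0::real))"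
  using filterlim_snd[of "at_right (0::real)" "nhds z"]
  by (auto simp: filterlim_at elim: eventually_mono)

lemma tendsto_fst_snd_nhds_at_right:
  "(fst \<longlongrightarrow> z) (nhds z \<times>\<^sub>F at_right (0::real))" "(snd \<longlongrightarrow> 0) (nhds z \<times>\<^sub>F at_right (0::real))"
  by (rule filterlim_fst)
    (rule filterlim_mono[OF filterlim_snd at_within_le_nhds order_refl])

lemma tendsto_shift_nhds_at_right:
  fixes a z :: "'a::real_normed_vector"
  shows "((\<lambda>x. fst x + snd x *\<^sub>R a) \<longlongrightarrow> z) (nhds z \<times>\<^sub>F at_right (0::real))"
proof -
  have "((\<lambda>x. fst x + snd x *\<^sub>R a) \<longlongrightarrow> z + 0 *\<^sub>R a) (nhds z \<times>\<^sub>F at_right (0::real))"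
    by (intro tendsto_add tendsto_scaleR tendsto_fst_snd_nhds_at_right tendsto_const)
  then show ?thesis by simp
qed

lemma filterlim_shift_scale_nhds_at_right:
  fixes z a :: "'a::real_normed_vector"
  assumes "c > 0"
  shows "filterlim (\<lambda>x. (fst x + snd x *\<^sub>R a, c * snd x))
           (nhds z \<times>\<^sub>F at_right 0) (nhds z \<times>\<^sub>F at_right 0)"
proof (rule filterlim_Pair)
  show "LIM x nhds z \<times>\<^sub>F at_right 0. c * snd x :> at_right 0"
    unfolding filterlim_at using assms tendsto_mult_right_zero[OF tendsto_fst_snd_nhds_at_right(2)]
    by (auto intro: eventually_mono[OF eventually_snd_pos])
  show "((\<lambda>x. fst x + snd x *\<^sub>R a) \<longlongrightarrow> z) (nhds z \<times>\<^sub>F at_right 0)"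
    by (rule tendsto_shift_nhds_at_right)
qed

lemma diff_quotient_lipschitz_bound:
  assumes "M-lipschitz_on UNIV F" "snd x > 0"
  shows "\<bar>diff_quotient F v x\<bar> \<le> M * norm v"
proof -
  have "\<bar>F (fst x + snd x *\<^sub>R v) - F (fst x)\<bar> \<le> M * (snd x * norm v)"
    using lipschitz_onD[OF assms(1), of "fst x + snd x *\<^sub>R v" "fst x"] assms(2)
    by (simp add: dist_norm dist_real_def)
  with assms(2) show ?thesis
    by (simp add: diff_quotient_real abs_div pos_divide_le_eq mult_ac)
qed

(* real_of_ereal sends the infinities to 0, so this is meaningful only where clarke_dd is finite,
   e.g. for Lipschitz F (clarke_dd_eq_ereal). *)

definition clarke_dd_real :: "('a::real_normed_vector \<Rightarrow> real) \<Rightarrow> 'a \<Rightarrow> 'a \<Rightarrow> real" where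
  "clarke_dd_real F z v = real_of_ereal (clarke_dd F z v)"

lemma clarke_dd_eq_ereal:
  assumes "M-lipschitz_on UNIV F"
  shows "clarke_dd F z v = ereal (clarke_dd_real F z v)"
proof -
  have bound: "eventually (\<lambda>x. \<bar>diff_quotient F v x\<bar> \<le> M * norm v) (nhds z \<times>\<^sub>F at_right 0)"
    using eventually_snd_pos by (rule eventually_mono) (rule diff_quotient_lipschitz_bound[OF assms])
  have "clarke_dd F z v \<le> ereal (M * norm v)"
    unfolding clarke_dd_diff_quotient
    by (rule Limsup_bounded) (use bound in \<open>auto elim!: eventually_mono\<close>)
  moreover have "ereal (- (M * norm v)) \<le> clarke_dd F z v"
    unfolding clarke_dd_diff_quotient
    by (rule le_Limsup) (use bound in \<open>auto simp: prod_filter_eq_bot elim!: eventually_mono\<close>)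
  ultimately show ?thesis
    unfolding clarke_dd_real_def by (cases "clarke_dd F z v") auto
qed

lemma clarke_dd_real_le_iff:
  assumes "M-lipschitz_on UNIV F"
  shows "clarke_dd_real F z v \<le> c \<longleftrightarrow>
           (\<forall>e>0. eventually (\<lambda>x. diff_quotient F v x < c + e) (nhds z \<times>\<^sub>F at_right 0))"
proof -
  have "clarke_dd_real F z v \<le> c \<longleftrightarrow> clarke_dd F z v \<le> ereal c"
    by (simp add: clarke_dd_eq_ereal[OF assms])
  then show ?thesis
    by (simp add: clarke_dd_diff_quotient Limsup_ereal_le_iff)
qed

lemma eventually_diff_quotient_less:
  assumes "M-lipschitz_on UNIV F" "e > 0"
  shows "eventually (\<lambda>x. diff_quotient F v x < clarke_dd_real F z v + e) (nhds z \<times>\<^sub>F at_right 0)"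
  using clarke_dd_real_le_iff[OF assms(1), of z v "clarke_dd_real F z v"] assms(2) by simp

lemma clarke_dd_real_zero: "clarke_dd_real F z 0 = 0"
proof -
  have "clarke_dd F z 0 = Limsup (nhds z \<times>\<^sub>F at_right (0::real)) (\<lambda>_. 0)"
    by (simp add: clarke_dd_diff_quotient diff_quotient_def zero_ereal_def)
  also have "\<dots> = 0"
    by (rule Limsup_const) (simp add: prod_filter_eq_bot)
  finally show ?thesis
    by (simp add: clarke_dd_real_def)
qed

lemma clarke_dd_real_scaleR:
  assumes lip: "M-lipschitz_on UNIV F" and "c \<ge> 0"
  shows "clarke_dd_real F z (c *\<^sub>R a) \<le> c * clarke_dd_real F z a"
proof (cases "c = 0")
  case True
  then show ?thesis by (simp add: clarke_dd_real_zero)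
next
  case False
  with \<open>c \<ge> 0\<close> have c: "c > 0" by simp
  show ?thesis
    unfolding clarke_dd_real_le_iff[OF lip]
  proof (intro allI impI)
    fix e :: real assume "e > 0"
    with c have "eventually (\<lambda>x. diff_quotient F a x < clarke_dd_real F z a + e / c)
                   (nhds z \<times>\<^sub>F at_right 0)"
      by (intro eventually_diff_quotient_less[OF lip]) simp
    with filterlim_shift_scale_nhds_at_right[OF c, where z=z and a=0]
    have "eventually (\<lambda>x. diff_quotient F a (fst x, c * snd x) < clarke_dd_real F z a + e / c)
            (nhds z \<times>\<^sub>F at_right 0)"
      by (auto simp: filterlim_iff)
    then show "eventually (\<lambda>x. diff_quotient F (c *\<^sub>R a) x < c * clarke_dd_real F z a + e)
                 (nhds z \<times>\<^sub>F at_right 0)"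
      using eventually_snd_pos
    proof eventually_elim
      case (elim x)
      then have "diff_quotient F (c *\<^sub>R a) x = c * diff_quotient F a (fst x, c * snd x)"
        using c by (simp add: diff_quotient_real field_simps)
      with elim c show ?case by (simp add: field_simps)
    qed
  qed
qed

lemma clarke_dd_real_add:
  assumes lip: "M-lipschitz_on UNIV F"
  shows "clarke_dd_real F z (a + b) \<le> clarke_dd_real F z a + clarke_dd_real F z b"
  unfolding clarke_dd_real_le_iff[OF lip]
proof (intro allI impI)
  fix e :: real assume "e > 0"
  then have "eventually (\<lambda>x. diff_quotient F a x < clarke_dd_real F z a + e / 2) (nhds z \<times>\<^sub>F at_right 0)"
    and b: "eventually (\<lambda>x. diff_quotient F b x < clarke_dd_real F z b + e / 2) (nhds z \<times>\<^sub>F at_right 0)"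
    by (auto intro: eventually_diff_quotient_less[OF lip])
  moreover from b filterlim_shift_scale_nhds_at_right[where c=1 and z=z and a=a]
  have "eventually (\<lambda>x. diff_quotient F b (fst x + snd x *\<^sub>R a, snd x) < clarke_dd_real F z b + e / 2)
          (nhds z \<times>\<^sub>F at_right 0)"
    by (auto simp: filterlim_iff)
  ultimately show "eventually (\<lambda>x. diff_quotient F (a + b) x
                     < clarke_dd_real F z a + clarke_dd_real F z b + e) (nhds z \<times>\<^sub>F at_right 0)"
    using eventually_snd_pos
  proof eventually_elim
    case (elim x)
    \<comment> \<open>telescoping through the intermediate point fst x + snd x *R a\<close>
    then have "diff_quotient F (a + b) x = diff_quotient F a x + diff_quotient F b (fst x + snd x *\<^sub>R a, snd x)"
      by (simp add: diff_quotient_real field_simps scaleR_add_right add.assoc)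
    with elim show ?case by simp
  qed
qed

section \<open>Subgradients orthogonal to a subspace\<close>

lemma convex_strict_epigraph:
  assumes "convex_on UNIV p"
  shows "convex {(w, t). p w < t}"
  unfolding convex_def
proof clarsimp
  fix w1 t1 w2 t2 and u v :: real
  assume "p w1 < t1" "p w2 < t2" "0 \<le> u" "0 \<le> v" "u + v = 1"
  moreover from this have "u * p w1 + v * p w2 < u * t1 + v * t2"
    by (cases "u = 0") (auto intro!: add_less_le_mono mult_strict_left_mono mult_left_mono)
  moreover have "p (u *\<^sub>R w1 + v *\<^sub>R w2) \<le> u * p w1 + v * p w2"
    using assms \<open>0 \<le> u\<close> \<open>0 \<le> v\<close> \<open>u + v = 1\<close> unfolding convex_on_def by blast
  ultimately show "p (u *\<^sub>R w1 + v *\<^sub>R w2) < u * t1 + v * t2"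
    by linarith
qed

lemma inner_bounded_on_range_times_nonpos:
  assumes L: "linear L" and le: "\<And>u s. s \<le> 0 \<Longrightarrow> a \<bullet> L u + c * s \<le> (b::real)"
  shows "a \<bullet> L u = 0" and "0 \<le> c" and "0 \<le> b"
proof -
  show b: "0 \<le> b"
    using le[of 0 0] linear_0[OF L] by simp
  show "a \<bullet> L u = 0"
  proof (rule ccontr)
    assume ne: "a \<bullet> L u \<noteq> 0"
    have "a \<bullet> L (((b + 1) / (a \<bullet> L u)) *\<^sub>R u) \<le> b"
      using le[of 0] by simp
    with ne show False
      by (simp add: linear_scale[OF L])
  qed
  show "0 \<le> c"
  proof (rule ccontr)
    assume "\<not> 0 \<le> c"
    then have "a \<bullet> L 0 + c * ((b + 1) / c) \<le> b"
      using b by (intro le) (simp add: divide_nonneg_neg)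
    with \<open>\<not> 0 \<le> c\<close> show False
      by (simp add: linear_0[OF L])
  qed
qed

lemma convex_on_sublinear:
  assumes add: "\<And>a b. p (a + b) \<le> p a + p b"
    and scale: "\<And>c a. c \<ge> 0 \<Longrightarrow> p (c *\<^sub>R a) \<le> c * p a"
  shows "convex_on UNIV p"
proof (rule convex_onI)
  fix t :: real and x y assume "0 < t" "t < 1"
  then show "p ((1 - t) *\<^sub>R x + t *\<^sub>R y) \<le> (1 - t) * p x + t * p y"
    using add[of "(1 - t) *\<^sub>R x" "t *\<^sub>R y"] scale[of "1 - t" x] scale[of t y] by simp
qed simp

lemma strict_epigraph_separated_from_range:
  fixes p :: "'a::euclidean_space \<Rightarrow> real" and L :: "'b::real_vector \<Rightarrow> 'a"
  assumes p: "convex_on UNIV p" and L: "linear L" and nonneg: "\<And>u. 0 \<le> p (L u)"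
  obtains a c b where "(a, c) \<noteq> 0"
    and "\<And>u s. s \<le> 0 \<Longrightarrow> a \<bullet> L u + c * s \<le> b"
    and "\<And>w t. p w < t \<Longrightarrow> b \<le> a \<bullet> w + c * t"
proof -
  define S where "S = range L \<times> {..0::real}"
  define K where "K = {(w, t). p w < t}"
  have "convex S"
    unfolding S_def by (intro convex_Times convex_linear_image[OF L] convex_UNIV) simp
  moreover have "convex K"
    unfolding K_def by (rule convex_strict_epigraph[OF p])
  moreover have "S \<inter> K = {}"
  proof safe
    fix w t assume "(w, t) \<in> S" "(w, t) \<in> K"
    then obtain u where "w = L u" "t \<le> 0" "p w < t"
      by (auto simp: S_def K_def)
    with nonneg[of u] show "(w, t) \<in> {}" by simp
  qed
  moreover have "(L 0, 0) \<in> S" "(0, p 0 + 1) \<in> K"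
    by (simp_all add: S_def K_def)
  ultimately obtain a b where "a \<noteq> 0" "\<forall>x\<in>S. a \<bullet> x \<le> b" "\<forall>x\<in>K. b \<le> a \<bullet> x"
    using separating_hyperplane_sets[of S K] by blast
  then show ?thesis
    by (intro that[of "fst a" "snd a" b]) (force simp: S_def K_def inner_prod_def)+
qed

lemma sublinear_minorant_vanishing_on_range:
  fixes p :: "'a::euclidean_space \<Rightarrow> real" and L :: "'b::real_vector \<Rightarrow> 'a"
  assumes add: "\<And>a b. p (a + b) \<le> p a + p b"
    and scale: "\<And>c a. c \<ge> 0 \<Longrightarrow> p (c *\<^sub>R a) \<le> c * p a"
    and L: "linear L" and nonneg: "\<And>u. 0 \<le> p (L u)"
  shows "\<exists>\<xi>. (\<forall>w. \<xi> \<bullet> w \<le> p w) \<and> (\<forall>u. \<xi> \<bullet> L u = 0)"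
proof -
  obtain a c b where ac: "(a, c) \<noteq> 0"
    and S_le: "\<And>u s. s \<le> 0 \<Longrightarrow> a \<bullet> L u + c * s \<le> b"
    and K_ge: "\<And>w t. p w < t \<Longrightarrow> b \<le> a \<bullet> w + c * t"
    using strict_epigraph_separated_from_range[OF convex_on_sublinear[OF add scale] L nonneg] by blast
  note bounds = inner_bounded_on_range_times_nonpos[OF L S_le]
  have "c \<noteq> 0"
  proof
    assume "c = 0"
    with K_ge[of "- a" "p (- a) + 1"] bounds(3) have "a \<bullet> a \<le> 0" by simp
    with ac \<open>c = 0\<close> show False
      by (simp add: zero_prod_def) (metis inner_gt_zero_iff not_le)
  qed
  with bounds(2) have c: "c > 0" by simp
  define \<xi> where "\<xi> = - (1 / c) *\<^sub>R a"
  have "\<xi> \<bullet> w \<le> p w" for w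
  proof (rule field_le_epsilon)
    fix e :: real assume "e > 0"
    then have "0 \<le> a \<bullet> w + c * (p w + e)"
      using K_ge[of w "p w + e"] bounds(3) by simp
    with c show "\<xi> \<bullet> w \<le> p w + e"
      by (simp add: \<xi>_def field_simps)
  qed
  moreover have "\<xi> \<bullet> L u = 0" for u
    using bounds(1) by (simp add: \<xi>_def)
  ultimately show ?thesis by blast
qed

lemma clarke_subgradient_orthogonal_to_range:
  fixes F :: "'a::euclidean_space \<Rightarrow> real" and L :: "'b::real_vector \<Rightarrow> 'a"
  assumes lip: "M-lipschitz_on UNIV F" and L: "linear L"
    and nonneg: "\<And>u. 0 \<le> clarke_dd F z (L u)"
  shows "\<exists>\<xi> \<in> clarke_subdiff F z. \<forall>u. \<xi> \<bullet> L u = 0"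
proof -
  have "0 \<le> clarke_dd_real F z (L u)" for u
    using nonneg[of u] by (simp add: clarke_dd_eq_ereal[OF lip])
  from sublinear_minorant_vanishing_on_range[OF clarke_dd_real_add[OF lip]
      clarke_dd_real_scaleR[OF lip] L this]
  obtain \<xi> where "\<forall>w. \<xi> \<bullet> w \<le> clarke_dd_real F z w" "\<forall>u. \<xi> \<bullet> L u = 0"
    by blast
  then show ?thesis
    by (auto simp: clarke_subdiff_def clarke_dd_eq_ereal[OF lip])
qed

section \<open>Strict directional derivatives and a Clarke chain rule\<close>

definition strict_dir_deriv ::
    "('a::real_normed_vector \<Rightarrow> 'b::real_normed_vector) \<Rightarrow> 'a \<Rightarrow> 'a \<Rightarrow> 'b \<Rightarrow> bool" where
  "strict_dir_deriv \<Phi> z v u \<longleftrightarrow> (diff_quotient \<Phi> v \<longlongrightarrow> u) (nhds z \<times>\<^sub>F at_right 0)"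

lemma strict_dir_deriv_linear:
  assumes "linear f"
  shows "strict_dir_deriv f z v (f v)"
  unfolding strict_dir_deriv_def
proof (rule Lim_transform_eventually[OF tendsto_const])
  show "eventually (\<lambda>x. f v = diff_quotient f v x) (nhds z \<times>\<^sub>F at_right 0)"
    using eventually_snd_pos
    by (rule eventually_mono) (simp add: diff_quotient_def linear_add[OF assms] linear_scale[OF assms])
qed

lemma strict_dir_deriv_Pair:
  assumes "strict_dir_deriv f z v a" "strict_dir_deriv g z v b"
  shows "strict_dir_deriv (\<lambda>w. (f w, g w)) z v (a, b)"
  using tendsto_Pair[OF assms[unfolded strict_dir_deriv_def]]
  by (simp add: strict_dir_deriv_def diff_quotient_def[abs_def])

lemma strict_dir_deriv_diff:
  assumes "strict_dir_deriv f z v a" "strict_dir_deriv g z v b"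
  shows "strict_dir_deriv (\<lambda>w. f w - g w) z v (a - b)"
proof -
  have "diff_quotient (\<lambda>w. f w - g w) v = (\<lambda>x. diff_quotient f v x - diff_quotient g v x)"
    by (simp add: fun_eq_iff diff_quotient_def algebra_simps)
  then show ?thesis
    using tendsto_diff[OF assms[unfolded strict_dir_deriv_def]] by (simp add: strict_dir_deriv_def)
qed

lemma strict_dir_deriv_matrix_mult_vanishing:
  fixes M :: "'a::real_normed_vector \<Rightarrow> real^'m^'k" and G :: "'a \<Rightarrow> real^'m"
  assumes G: "strict_dir_deriv G z v b" and G_cont: "isCont G z" and G_z: "G z = 0"
    and M_lip: "\<And>w w' y. norm ((M w - M w') *v y) \<le> K * dist w w' * norm y"
    and M_bdd: "\<And>w y. norm (M w *v y) \<le> B * norm y"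
  shows "strict_dir_deriv (\<lambda>w. M w *v G w) z v (M z *v b)"
proof -
  let ?F = "nhds z \<times>\<^sub>F at_right (0::real)"
  let ?w' = "\<lambda>x. fst x + snd x *\<^sub>R v"
  have lim1: "((\<lambda>x. M (?w' x) *v (diff_quotient G v x - b)) \<longlongrightarrow> 0) ?F"
    using G[unfolded strict_dir_deriv_def, THEN Lim_null[THEN iffD1]]
    by (rule tendsto_0_le[where K = B]) (simp add: M_bdd mult.commute)
  have lim2: "((\<lambda>x. (M (?w' x) - M z) *v b) \<longlongrightarrow> 0) ?F"
    using tendsto_shift_nhds_at_right[of v z, THEN Lim_null[THEN iffD1]]
    by (rule tendsto_0_le[where K = "K * norm b"])
      (use M_lip in \<open>auto intro!: always_eventually simp: dist_norm mult_ac\<close>)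
  have lim3: "((\<lambda>x. ((M (?w' x) - M (fst x)) *v G (fst x)) /\<^sub>R snd x) \<longlongrightarrow> 0) ?F"
  proof (rule tendsto_0_le[where K = "K * norm v"])
    show "((\<lambda>x. G (fst x)) \<longlongrightarrow> 0) ?F"
      using isCont_tendsto_compose[OF G_cont tendsto_fst_snd_nhds_at_right(1)] G_z by simp
    show "eventually (\<lambda>x. norm (((M (?w' x) - M (fst x)) *v G (fst x)) /\<^sub>R snd x)
            \<le> norm (G (fst x)) * (K * norm v)) ?F"
      using eventually_snd_pos
    proof (rule eventually_mono)
      fix x :: "'a \<times> real" assume t: "0 < snd x"
      have "norm ((M (?w' x) - M (fst x)) *v G (fst x)) \<le> K * (snd x * norm v) * norm (G (fst x))"
        using M_lip[of "?w' x" "fst x" "G (fst x)"] t by (simp add: dist_norm)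
      with t show "norm (((M (?w' x) - M (fst x)) *v G (fst x)) /\<^sub>R snd x)
                     \<le> norm (G (fst x)) * (K * norm v)"
        by (simp add: field_simps)
    qed
  qed
  have "((\<lambda>x. diff_quotient (\<lambda>w. M w *v G w) v x - M z *v b) \<longlongrightarrow> 0) ?F"
  proof (rule Lim_transform_eventually[OF tendsto_add_zero[OF tendsto_add_zero[OF lim1 lim2] lim3]])
    show "eventually (\<lambda>x. M (?w' x) *v (diff_quotient G v x - b) + (M (?w' x) - M z) *v b
            + ((M (?w' x) - M (fst x)) *v G (fst x)) /\<^sub>R snd x
            = diff_quotient (\<lambda>w. M w *v G w) v x - M z *v b) ?F"
      using eventually_snd_pos
      by (rule eventually_mono)
        (simp add: diff_quotient_def matrix_vector_mult_diff_distrib matrix_vector_mult_diff_rdistrib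
          matrix_vector_mult_scaleR scaleR_diff_right)
  qed
  then show ?thesis
    by (simp add: strict_dir_deriv_def Lim_null[symmetric])
qed

lemma strict_dir_deriv_scaled_norm_square_vanishing:
  fixes G :: "'a::real_normed_vector \<Rightarrow> 'b::real_inner"
  assumes G: "strict_dir_deriv G z v b" and G_cont: "isCont G z" and G_z: "G z = 0"
  shows "strict_dir_deriv (\<lambda>w. c * (norm (G w))\<^sup>2) z v 0"
proof -
  let ?F = "nhds z \<times>\<^sub>F at_right (0::real)"
  have "((\<lambda>x. G (fst x + snd x *\<^sub>R v)) \<longlongrightarrow> 0) ?F" "((\<lambda>x. G (fst x)) \<longlongrightarrow> 0) ?F"
    using isCont_tendsto_compose[OF G_cont tendsto_shift_nhds_at_right]
      isCont_tendsto_compose[OF G_cont tendsto_fst_snd_nhds_at_right(1)] G_z by simp_all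
  with G have "((\<lambda>x. c * (diff_quotient G v x \<bullet> (G (fst x + snd x *\<^sub>R v) + G (fst x))))
                  \<longlongrightarrow> c * (b \<bullet> (0 + 0))) ?F"
    unfolding strict_dir_deriv_def by (intro tendsto_intros)
  moreover have "eventually (\<lambda>x. c * (diff_quotient G v x \<bullet> (G (fst x + snd x *\<^sub>R v) + G (fst x)))
                   = diff_quotient (\<lambda>w. c * (norm (G w))\<^sup>2) v x) ?F"
    using eventually_snd_pos
  proof (rule eventually_mono)
    fix x :: "'a \<times> real"
    define a b where "a = G (fst x + snd x *\<^sub>R v)" and "b = G (fst x)"
    have "(a - b) \<bullet> (a + b) = (norm a)\<^sup>2 - (norm b)\<^sup>2"
      by (simp add: algebra_simps inner_commute power2_norm_eq_inner)
    then show "c * (diff_quotient G v x \<bullet> (G (fst x + snd x *\<^sub>R v) + G (fst x)))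
                 = diff_quotient (\<lambda>w. c * (norm (G w))\<^sup>2) v x"
      by (simp add: diff_quotient_def a_def b_def right_diff_distrib divide_inverse mult_ac)
  qed
  ultimately show ?thesis
    unfolding strict_dir_deriv_def by (simp add: Lim_transform_eventually)
qed

lemma norm_increment_sub_derivative_le:
  fixes f :: "'a::real_normed_vector \<Rightarrow> 'b::real_normed_vector"
  assumes f': "\<And>u. (f has_derivative f' u) (at u)"
    and lip: "\<And>u. onorm (\<lambda>h. f' u h - f' z h) \<le> K * dist u z" and t: "t \<ge> 0"
  shows "norm (f (w + t *\<^sub>R v) - f w - f' z (t *\<^sub>R v)) \<le> t * norm v * (\<bar>K\<bar> * (dist w z + t * norm v))"
proof -
  let ?S = "cball z (dist w z + t * norm v)"
  have seg: "w + \<tau> *\<^sub>R (w + t *\<^sub>R v - w) \<in> ?S" if "\<tau> \<in> {0..1}" for \<tau>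
  proof -
    have "dist (w + (\<tau> * t) *\<^sub>R v) z \<le> dist w z + (\<tau> * t) * norm v"
      using that t norm_triangle_ineq[of "w - z" "(\<tau> * t) *\<^sub>R v"]
      by (simp add: dist_norm algebra_simps)
    also have "\<dots> \<le> dist w z + t * norm v"
      using that t by (simp add: mult_right_mono mult_left_le_one_le)
    finally show ?thesis by (simp add: dist_commute)
  qed
  have "onorm (f' u - f' z) \<le> \<bar>K\<bar> * (dist w z + t * norm v)" if "u \<in> ?S" for u
  proof -
    have "onorm (\<lambda>h. f' u h - f' z h) \<le> K * dist u z" by (rule lip)
    also have "\<dots> \<le> \<bar>K\<bar> * dist u z" by (simp add: mult_right_mono)
    also have "\<dots> \<le> \<bar>K\<bar> * (dist w z + t * norm v)" using that by (simp add: mult_left_mono dist_commute)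
    finally show ?thesis by (simp add: fun_diff_def)
  qed
  moreover have "z \<in> ?S"
    using t by simp
  ultimately have "norm (f (w + t *\<^sub>R v) - f w - f' z (w + t *\<^sub>R v - w))
                     \<le> norm (w + t *\<^sub>R v - w) * (\<bar>K\<bar> * (dist w z + t * norm v))"
    by (intro differentiable_bound_linearization[OF seg has_derivative_at_withinI[OF f']])
  with t show ?thesis
    by simp
qed

lemma strict_dir_deriv_if_derivative_lipschitz:
  fixes f :: "'a::real_normed_vector \<Rightarrow> 'b::real_normed_vector"
  assumes f': "\<And>u. (f has_derivative f' u) (at u)"
    and lip: "\<And>u. onorm (\<lambda>h. f' u h - f' z h) \<le> K * dist u z"
  shows "strict_dir_deriv f z v (f' z v)"
proof -
  let ?F = "nhds z \<times>\<^sub>F at_right (0::real)"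
  let ?\<rho> = "\<lambda>x. dist (fst x) z + snd x * norm v"
  have "(?\<rho> \<longlongrightarrow> dist z z + 0 * norm v) ?F"
    by (intro tendsto_intros tendsto_fst_snd_nhds_at_right)
  then have "(?\<rho> \<longlongrightarrow> 0) ?F" by simp
  moreover have "eventually (\<lambda>x. norm (diff_quotient f v x - f' z v) \<le> norm (?\<rho> x) * (\<bar>K\<bar> * norm v)) ?F"
    using eventually_snd_pos
  proof (rule eventually_mono)
    fix x :: "'a \<times> real" assume t: "0 < snd x"
    have "diff_quotient f v x - f' z v
            = (f (fst x + snd x *\<^sub>R v) - f (fst x) - f' z (snd x *\<^sub>R v)) /\<^sub>R snd x"
      using t linear_scale[OF has_derivative_linear[OF f'[of z]]]
      by (simp add: diff_quotient_def scaleR_diff_right)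
    with t norm_increment_sub_derivative_le[OF f' lip, of "snd x" "fst x" v]
    show "norm (diff_quotient f v x - f' z v) \<le> norm (?\<rho> x) * (\<bar>K\<bar> * norm v)"
      by (simp add: inverse_eq_divide pos_divide_le_eq mult_ac)
  qed
  ultimately show ?thesis
    unfolding strict_dir_deriv_def Lim_null[of "diff_quotient f v"] by (rule tendsto_0_le)
qed

lemma diff_quotient_comp_add_remainder:
  fixes F :: "'a::real_normed_vector \<Rightarrow> real" and \<Phi> :: "'b::real_normed_vector \<Rightarrow> 'a"
  assumes lip: "M-lipschitz_on UNIV F"
    and \<Phi>: "strict_dir_deriv \<Phi> z v u" and q: "strict_dir_deriv q z v 0"
  shows "((\<lambda>x. diff_quotient (\<lambda>w. F (\<Phi> w) + q w) v x - diff_quotient F u (\<Phi> (fst x), snd x))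
           \<longlongrightarrow> 0) (nhds z \<times>\<^sub>F at_right 0)"
proof -
  let ?F = "nhds z \<times>\<^sub>F at_right (0::real)"
  let ?E = "\<lambda>x. (F (\<Phi> (fst x + snd x *\<^sub>R v)) - F (\<Phi> (fst x) + snd x *\<^sub>R u)) / snd x"
  have "(?E \<longlongrightarrow> 0) ?F"
    using \<Phi>[unfolded strict_dir_deriv_def, THEN Lim_null[THEN iffD1]]
  proof (rule tendsto_0_le[where K = M])
    show "eventually (\<lambda>x. norm (?E x) \<le> norm (diff_quotient \<Phi> v x - u) * M) ?F"
      using eventually_snd_pos
    proof (rule eventually_mono)
      fix x :: "'b \<times> real" assume t: "0 < snd x"
      have "\<Phi> (fst x + snd x *\<^sub>R v) - (\<Phi> (fst x) + snd x *\<^sub>R u) = snd x *\<^sub>R (diff_quotient \<Phi> v x - u)"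
        using t by (simp add: diff_quotient_def scaleR_diff_right)
      then have "\<bar>F (\<Phi> (fst x + snd x *\<^sub>R v)) - F (\<Phi> (fst x) + snd x *\<^sub>R u)\<bar>
                   \<le> M * (snd x * norm (diff_quotient \<Phi> v x - u))"
        using lipschitz_onD[OF lip, of "\<Phi> (fst x + snd x *\<^sub>R v)" "\<Phi> (fst x) + snd x *\<^sub>R u"] t
        by (simp add: dist_norm dist_real_def)
      with t show "norm (?E x) \<le> norm (diff_quotient \<Phi> v x - u) * M"
        by (simp add: abs_div pos_divide_le_eq mult_ac)
    qed
  qed
  with q have "((\<lambda>x. ?E x + diff_quotient q v x) \<longlongrightarrow> 0) ?F"
    unfolding strict_dir_deriv_def by (rule tendsto_add_zero[rotated])
  moreover have "eventually (\<lambda>x. ?E x + diff_quotient q v x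
      = diff_quotient (\<lambda>w. F (\<Phi> w) + q w) v x - diff_quotient F u (\<Phi> (fst x), snd x)) ?F"
    using eventually_snd_pos
    by (rule eventually_mono) (simp add: diff_quotient_real diff_divide_distrib add_divide_distrib)
  ultimately show ?thesis
    by (rule Lim_transform_eventually)
qed

lemma clarke_dd_comp_add_le:
  fixes F :: "'a::real_normed_vector \<Rightarrow> real" and \<Phi> :: "'b::real_normed_vector \<Rightarrow> 'a"
  assumes lip: "M-lipschitz_on UNIV F" and cont: "isCont \<Phi> z"
    and \<Phi>: "strict_dir_deriv \<Phi> z v u" and q: "strict_dir_deriv q z v 0"
  shows "clarke_dd (\<lambda>w. F (\<Phi> w) + q w) z v \<le> clarke_dd F (\<Phi> z) u"
  unfolding clarke_dd_diff_quotient[of "\<lambda>w. F (\<Phi> w) + q w"] clarke_dd_eq_ereal[OF lip]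
    Limsup_ereal_le_iff
proof (intro allI impI)
  fix e :: real assume e: "e > 0"
  let ?F = "nhds z \<times>\<^sub>F at_right (0::real)"
  have "filterlim (\<lambda>x. (\<Phi> (fst x), snd x)) (nhds (\<Phi> z) \<times>\<^sub>F at_right 0) ?F"
    by (intro filterlim_Pair isCont_tendsto_compose[OF cont] tendsto_fst_snd_nhds_at_right
        filterlim_snd)
  moreover have "eventually (\<lambda>x. diff_quotient F u x < clarke_dd_real F (\<Phi> z) u + e / 2)
                   (nhds (\<Phi> z) \<times>\<^sub>F at_right 0)"
    using e by (intro eventually_diff_quotient_less[OF lip]) simp
  ultimately have "eventually (\<lambda>x. diff_quotient F u (\<Phi> (fst x), snd x)
                     < clarke_dd_real F (\<Phi> z) u + e / 2) ?F"
    by (auto simp: filterlim_iff)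
  moreover have "eventually (\<lambda>x. diff_quotient (\<lambda>w. F (\<Phi> w) + q w) v x
                   - diff_quotient F u (\<Phi> (fst x), snd x) < e / 2) ?F"
    using order_tendstoD(2)[OF diff_quotient_comp_add_remainder[OF lip \<Phi> q], of "e / 2"] e
    by simp
  ultimately show "eventually (\<lambda>x. diff_quotient (\<lambda>w. F (\<Phi> w) + q w) v x
                     < clarke_dd_real F (\<Phi> z) u + e) ?F"
    by eventually_elim simp
qed

lemma tendsto_diff_quotient_le_clarke_dd:
  assumes "((\<lambda>t. diff_quotient F v (z, t)) \<longlongrightarrow> d) (at_right 0)"
  shows "ereal d \<le> clarke_dd F z v"
proof (rule ccontr)
  assume "\<not> ereal d \<le> clarke_dd F z v"
  then have "clarke_dd F z v < ereal d" by simp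
  then obtain r where r: "clarke_dd F z v < ereal r" "ereal r < ereal d"
    using ereal_dense2 by blast
  have pair: "filterlim (\<lambda>t. (z, t)) (nhds z \<times>\<^sub>F at_right 0) (at_right (0::real))"
    by (intro filterlim_Pair tendsto_const filterlim_ident)
  have "eventually (\<lambda>x. ereal (diff_quotient F v x) < ereal r) (nhds z \<times>\<^sub>F at_right 0)"
    using r(1) unfolding clarke_dd_diff_quotient by (rule Limsup_lessD)
  from pair[unfolded filterlim_iff, rule_format, OF this]
  have "eventually (\<lambda>t. diff_quotient F v (z, t) \<le> r) (at_right 0)"
    by (rule eventually_mono) simp
  with assms have "d \<le> r"
    by (intro tendsto_le[OF trivial_limit_at_right_real tendsto_const])
  with r(2) show False by simp
qed

lemma clarke_dd_comp_add_ge_if_regular: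
  fixes F :: "'a::real_normed_vector \<Rightarrow> real" and \<Phi> :: "'b::real_normed_vector \<Rightarrow> 'a"
  assumes lip: "M-lipschitz_on UNIV F" and reg: "clarke_regular_at F (\<Phi> z)"
    and \<Phi>: "strict_dir_deriv \<Phi> z v u" and q: "strict_dir_deriv q z v 0"
  shows "clarke_dd F (\<Phi> z) u \<le> clarke_dd (\<lambda>w. F (\<Phi> w) + q w) z v"
proof -
  obtain d where lim: "((\<lambda>t. diff_quotient F u (\<Phi> z, t)) \<longlongrightarrow> d) (at_right 0)"
    and dd: "clarke_dd F (\<Phi> z) u = ereal d"
    using reg by (auto simp: clarke_regular_at_def diff_quotient_real)
  have "filterlim (\<lambda>t. (z, t)) (nhds z \<times>\<^sub>F at_right 0) (at_right (0::real))"
    by (intro filterlim_Pair tendsto_const filterlim_ident)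
  from filterlim_compose[OF diff_quotient_comp_add_remainder[OF lip \<Phi> q] this]
  have "((\<lambda>t. diff_quotient (\<lambda>w. F (\<Phi> w) + q w) v (z, t) - diff_quotient F u (\<Phi> z, t))
          \<longlongrightarrow> 0) (at_right 0)"
    by simp
  from tendsto_add[OF lim this]
  have "((\<lambda>t. diff_quotient (\<lambda>w. F (\<Phi> w) + q w) v (z, t)) \<longlongrightarrow> d) (at_right 0)"
    by simp
  then show ?thesis
    unfolding dd by (rule tendsto_diff_quotient_le_clarke_dd)
qed

section \<open>Symmetry of the Hessian\<close>

lemma has_derivative_grad:
  fixes g :: "'a::euclidean_space \<Rightarrow> real"
  assumes "g differentiable (at z)"
  shows "(g has_derivative (\<lambda>h. grad g z \<bullet> h)) (at z)"
proof -
  obtain D where D: "(g has_derivative D) (at z)"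
    using assms unfolding differentiable_def by blast
  have "D = (\<lambda>h. (\<Sum>b\<in>Basis. D b *\<^sub>R b) \<bullet> h)"
  proof
    fix h
    have "D h = D (\<Sum>b\<in>Basis. (h \<bullet> b) *\<^sub>R b)"
      by (simp add: euclidean_representation)
    also have "\<dots> = (\<Sum>b\<in>Basis. D b *\<^sub>R b) \<bullet> h"
      using has_derivative_linear[OF D]
      by (simp add: linear_sum linear_scale inner_sum_left inner_commute[of h] mult.commute)
    finally show "D h = (\<Sum>b\<in>Basis. D b *\<^sub>R b) \<bullet> h" .
  qed
  with D have "(g has_derivative (\<lambda>h. (\<Sum>b\<in>Basis. D b *\<^sub>R b) \<bullet> h)) (at z)"
    by simp
  then have "\<exists>v. (g has_derivative (\<lambda>h. v \<bullet> h)) (at z)" ..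
  then show ?thesis
    unfolding grad_def by (rule someI_ex)
qed

lemma has_derivative_hess:
  assumes "grad g differentiable (at z)"
  shows "(grad g has_derivative hess g z) (at z)"
  using assms unfolding hess_def differentiable_def by (rule someI_ex)

lemma has_real_derivative_along_line:
  fixes g :: "'a::euclidean_space \<Rightarrow> real"
  assumes "g differentiable (at (c + \<tau> *\<^sub>R b))"
  shows "((\<lambda>\<tau>. g (c + \<tau> *\<^sub>R b)) has_real_derivative (grad g (c + \<tau> *\<^sub>R b) \<bullet> b)) (at \<tau>)"
proof -
  have "((\<lambda>\<tau>. c + \<tau> *\<^sub>R b) has_derivative (\<lambda>t. t *\<^sub>R b)) (at \<tau>)"
    by (auto intro!: derivative_eq_intros)
  from diff_chain_at[OF this has_derivative_grad[OF assms]]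
  have "((\<lambda>\<tau>. g (c + \<tau> *\<^sub>R b)) has_derivative (\<lambda>t. t * (grad g (c + \<tau> *\<^sub>R b) \<bullet> b))) (at \<tau>)"
    by (simp add: o_def)
  then show ?thesis
    by (simp add: has_field_derivative_def mult_commute_abs)
qed

lemma second_difference_approx:
  fixes g :: "'a::euclidean_space \<Rightarrow> real"
  assumes g: "\<And>u. g differentiable (at u)" and D: "linear D"
    and near: "\<And>y. norm (y - z) < d \<Longrightarrow> norm (grad g y - grad g z - D (y - z)) \<le> e * norm (y - z)"
    and s: "s > 0" "s * (norm a + norm b) < d" and e: "e \<ge> 0"
  shows "\<bar>g (z + s *\<^sub>R a + s *\<^sub>R b) - g (z + s *\<^sub>R a) - g (z + s *\<^sub>R b) + g z - s\<^sup>2 * (D a \<bullet> b)\<bar>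
           \<le> s\<^sup>2 * (2 * e * (norm a + norm b) * norm b)"
proof -
  define \<psi> where "\<psi> \<tau> = g (z + s *\<^sub>R a + \<tau> *\<^sub>R b) - g (z + \<tau> *\<^sub>R b)" for \<tau>
  define r where "r w = grad g (z + w) - grad g z - D w" for w
  define \<psi>' where "\<psi>' \<tau> = grad g (z + s *\<^sub>R a + \<tau> *\<^sub>R b) \<bullet> b - grad g (z + \<tau> *\<^sub>R b) \<bullet> b" for \<tau>
  have "(\<psi> has_real_derivative \<psi>' \<tau>) (at \<tau>)" for \<tau>
    unfolding \<psi>_def \<psi>'_def by (intro DERIV_diff has_real_derivative_along_line g)
  from MVT2[OF s(1) this] obtain \<theta> where \<theta>: "0 < \<theta>" "\<theta> < s" and mvt: "\<psi> s - \<psi> 0 = s * \<psi>' \<theta>"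
    by auto
  define w1 w2 where "w1 = s *\<^sub>R a + \<theta> *\<^sub>R b" and "w2 = \<theta> *\<^sub>R b"
  have "\<theta> * norm b \<le> s * norm b"
    using \<theta> by (simp add: mult_right_mono)
  then have "norm w1 \<le> s * (norm a + norm b)" "norm w2 \<le> s * (norm a + norm b)"
    using \<theta> s norm_triangle_ineq[of "s *\<^sub>R a" "\<theta> *\<^sub>R b"]
    by (simp_all add: w1_def w2_def distrib_left add_increasing)
  then have "norm (r w1) \<le> e * (s * (norm a + norm b))" "norm (r w2) \<le> e * (s * (norm a + norm b))"
    using near[of "z + w1"] near[of "z + w2"] s(2) e
    by (simp_all add: r_def) (meson mult_left_mono order_trans)+
  then have "norm (r w1 - r w2) \<le> 2 * e * s * (norm a + norm b)"
    using norm_triangle_ineq4[of "r w1" "r w2"] by simp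
  have "r w1 - r w2 = grad g (z + s *\<^sub>R a + \<theta> *\<^sub>R b) - grad g (z + \<theta> *\<^sub>R b) - s *\<^sub>R D a"
    by (simp add: r_def w1_def w2_def linear_add[OF D] linear_scale[OF D] add.assoc)
  then have r_inner: "(r w1 - r w2) \<bullet> b = \<psi>' \<theta> - s * (D a \<bullet> b)"
    by (simp add: \<psi>'_def inner_diff_left)
  have "g (z + s *\<^sub>R a + s *\<^sub>R b) - g (z + s *\<^sub>R a) - g (z + s *\<^sub>R b) + g z - s\<^sup>2 * (D a \<bullet> b)
      = s * \<psi>' \<theta> - s\<^sup>2 * (D a \<bullet> b)"
    using mvt by (simp add: \<psi>_def algebra_simps)
  also have "\<dots> = s * ((r w1 - r w2) \<bullet> b)"
    unfolding r_inner by (simp add: power2_eq_square right_diff_distrib)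
  also have "\<bar>\<dots>\<bar> \<le> s * (norm (r w1 - r w2) * norm b)"
    using s Cauchy_Schwarz_ineq2[of "r w1 - r w2" b] by (simp add: abs_mult)
  also have "\<dots> \<le> s * (2 * e * s * (norm a + norm b) * norm b)"
    using \<open>norm (r w1 - r w2) \<le> _\<close> s by (intro mult_left_mono mult_right_mono) auto
  finally show ?thesis
    by (simp add: power2_eq_square mult_ac)
qed

lemma hess_asymmetry_le:
  fixes g :: "'a::euclidean_space \<Rightarrow> real"
  assumes g: "\<And>u. g differentiable (at u)" and g2: "grad g differentiable (at z)" and e: "e > 0"
  shows "\<bar>hess g z a \<bullet> b - hess g z b \<bullet> a\<bar> \<le> e * (2 * (norm a + norm b)\<^sup>2)"
proof -
  let ?D = "hess g z"
  have D: "(grad g has_derivative ?D) (at z)"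
    by (rule has_derivative_hess[OF g2])
  obtain d where d: "d > 0"
    "\<And>y. norm (y - z) < d \<Longrightarrow> norm (grad g y - grad g z - ?D (y - z)) \<le> e * norm (y - z)"
    using D e unfolding has_derivative_at_alt by blast
  define s where "s = d / (2 * (norm a + norm b + 1))"
  have den: "0 < 2 * (norm a + norm b + 1)"
    by (smt (verit) norm_ge_zero)
  with d(1) have "s > 0"
    by (simp add: s_def)
  have "s * (norm a + norm b) < s * (2 * (norm a + norm b + 1))"
    using \<open>s > 0\<close> by (intro mult_strict_left_mono) (smt (verit) norm_ge_zero)+
  also have "\<dots> = d"
    using den by (simp add: s_def)
  finally have s_ab: "s * (norm a + norm b) < d" .
  then have s_ba: "s * (norm b + norm a) < d"
    by (simp add: add.commute)
  have "g (z + s *\<^sub>R b + s *\<^sub>R a) = g (z + s *\<^sub>R a + s *\<^sub>R b)"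
    by (simp add: algebra_simps)
  then have "\<bar>s\<^sup>2 * (?D a \<bullet> b) - s\<^sup>2 * (?D b \<bullet> a)\<bar>
               \<le> s\<^sup>2 * (2 * e * (norm a + norm b) * norm b) + s\<^sup>2 * (2 * e * (norm b + norm a) * norm a)"
    using second_difference_approx[OF g has_derivative_linear[OF D] d(2) \<open>s > 0\<close> s_ab]
      second_difference_approx[OF g has_derivative_linear[OF D] d(2) \<open>s > 0\<close> s_ba] e
    unfolding abs_le_iff by linarith
  also have "\<dots> = s\<^sup>2 * (e * (2 * (norm a + norm b)\<^sup>2))"
    by (simp add: power2_eq_square algebra_simps)
  finally show ?thesis
    using \<open>s > 0\<close> by (simp add: right_diff_distrib[symmetric] abs_mult)
qed

lemma hess_symmetric:
  fixes g :: "'a::euclidean_space \<Rightarrow> real"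
  assumes g: "\<And>u. g differentiable (at u)" and g2: "grad g differentiable (at z)"
  shows "hess g z a \<bullet> b = hess g z b \<bullet> a"
proof -
  define C where "C = 2 * (norm a + norm b)\<^sup>2"
  have "\<bar>hess g z a \<bullet> b - hess g z b \<bullet> a\<bar> \<le> 0"
  proof (rule field_le_epsilon)
    fix e :: real assume "e > 0"
    have "C \<ge> 0" by (simp add: C_def)
    with \<open>e > 0\<close> have "e / (C + 1) > 0" "e / (C + 1) * C \<le> e"
      by (simp_all add: field_simps)
    with hess_asymmetry_le[OF g g2, of "e / (C + 1)" a b]
    show "\<bar>hess g z a \<bullet> b - hess g z b \<bullet> a\<bar> \<le> 0 + e"
      unfolding C_def by linarith
  qed
  then show ?thesis by simp
qed

lemma norm_matrix_vector_mult_le_onorm: "norm (M *v v) \<le> onorm (\<lambda>v. M *v v) * norm v"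
  for M :: "real^'q^'r"
  using onorm[OF matrix_vector_mul_bounded_linear[of M]] by simp

section \<open>The strongly convex lower-level problem\<close>

locale strongly_convex_lower_level =
  fixes g :: "(real^'n) \<times> (real^'p) \<Rightarrow> real" and \<mu> Lg Qg :: real
  assumes mu_pos: "\<mu> > 0"
    and g_diff: "\<And>z. g differentiable (at z)"
    and g_twice: "\<And>z. grad g differentiable (at z)"
    and g_strong: "\<And>z v. v \<bullet> (hess_yy g z *v v) \<ge> \<mu> * (norm v)\<^sup>2"
    and grad_lip: "Lg-lipschitz_on UNIV (grad g)"
    and hyy_lip: "\<And>z w. onorm (\<lambda>v. (hess_yy g z - hess_yy g w) *v v) \<le> Qg * dist z w"
    and hxy_lip: "\<And>z w. onorm (\<lambda>v. (hess_xy g z - hess_xy g w) *v v) \<le> Qg * dist z w"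
begin

lemma bounded_linear_hess: "bounded_linear (hess g z)"
  using has_derivative_hess[OF g_twice] by (rule has_derivative_bounded_linear)

lemma linear_snd_hess_Pair:
  "linear (\<lambda>b. snd (hess g z (0, b)))" "linear (\<lambda>a. snd (hess g z (a, 0)))"
  using bounded_linear_hess[of z]
  by (auto intro!: bounded_linear.linear bounded_linear_compose[OF bounded_linear_snd]
      bounded_linear_compose[OF _ bounded_linear_Pair] bounded_linear_ident bounded_linear_zero)

lemma hess_yy_mult: "hess_yy g z *v b = snd (hess g z (0, b))"
proof -
  have "hess_yy g z = matrix (\<lambda>b. snd (hess g z (0, b)))"
    unfolding hess_yy_def matrix_def ..
  then show ?thesis
    using matrix_vector_mul(2)[OF linear_snd_hess_Pair(1)] by metis
qed

lemma inner_hess_xy_mult: "(hess_xy g z *v y) \<bullet> a = snd (hess g z (a, 0)) \<bullet> y"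
proof -
  have "transpose (hess_xy g z) = matrix (\<lambda>a. snd (hess g z (a, 0)))"
    unfolding hess_xy_def matrix_def transpose_def by simp
  then have "transpose (hess_xy g z) *v a = snd (hess g z (a, 0))"
    using matrix_vector_mul(2)[OF linear_snd_hess_Pair(2)] by metis
  then have "a v* hess_xy g z = snd (hess g z (a, 0))"
    by simp
  then show ?thesis
    using dot_lmul_matrix[of a "hess_xy g z" y] by (simp add: inner_commute)
qed

lemma snd_hess_Pair: "snd (hess g z (a, b)) = snd (hess g z (a, 0)) + hess_yy g z *v b"
proof -
  have "hess g z (a, b) = hess g z (a, 0) + hess g z (0, b)"
    using linear_add[OF bounded_linear.linear[OF bounded_linear_hess], of z "(a, 0)" "(0, b)"] by simp
  then show ?thesis
    by (simp add: hess_yy_mult)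
qed

lemma hess_yy_symmetric: "(hess_yy g z *v x) \<bullet> y = x \<bullet> (hess_yy g z *v y)"
proof -
  have "(hess_yy g z *v x) \<bullet> y = hess g z (0, x) \<bullet> (0, y)"
    by (simp add: hess_yy_mult inner_Pair_0)
  also have "\<dots> = hess g z (0, y) \<bullet> (0, x)"
    by (rule hess_symmetric[OF g_diff g_twice])
  also have "\<dots> = x \<bullet> (hess_yy g z *v y)"
    by (simp add: hess_yy_mult inner_Pair_0 inner_commute[of x])
  finally show ?thesis .
qed

lemma norm_hess_yy_mult_ge: "\<mu> * norm v \<le> norm (hess_yy g z *v v)"
proof (cases "v = 0")
  case False
  have "norm v * (\<mu> * norm v) = \<mu> * (norm v)\<^sup>2"
    by (simp add: power2_eq_square)
  also have "\<dots> \<le> v \<bullet> (hess_yy g z *v v)"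
    by (rule g_strong)
  also have "\<dots> \<le> norm v * norm (hess_yy g z *v v)"
    by (rule norm_cauchy_schwarz)
  finally show ?thesis
    using False by simp
qed simp

lemma hess_yy_inverse:
  "hess_yy g z ** matrix_inv (hess_yy g z) = mat 1 \<and> matrix_inv (hess_yy g z) ** hess_yy g z = mat 1"
proof -
  have "x = 0" if "hess_yy g z *v x = 0" for x
    using norm_hess_yy_mult_ge[of x z] that mu_pos by (simp add: mult_le_0_iff)
  then obtain B where B: "B ** hess_yy g z = mat 1"
    using matrix_left_invertible_ker by blast
  then have "hess_yy g z ** B = mat 1"
    using matrix_left_right_inverse by blast
  with B show ?thesis
    unfolding matrix_inv_def by (intro someI_ex[where P = "\<lambda>A. _ ** A = mat 1 \<and> A ** _ = mat 1"]) blast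
qed

lemma hess_yy_mult_inv [simp]: "hess_yy g z *v (matrix_inv (hess_yy g z) *v v) = v"
  and inv_mult_hess_yy [simp]: "matrix_inv (hess_yy g z) *v (hess_yy g z *v v) = v"
  using hess_yy_inverse by (simp_all add: matrix_vector_mul_assoc)

lemma norm_inv_hess_yy_mult_le: "norm (matrix_inv (hess_yy g z) *v v) \<le> norm v / \<mu>"
  using norm_hess_yy_mult_ge[of "matrix_inv (hess_yy g z) *v v" z] mu_pos
  by (simp add: field_simps)

lemma inv_hess_yy_symmetric:
  "(matrix_inv (hess_yy g z) *v x) \<bullet> y = x \<bullet> (matrix_inv (hess_yy g z) *v y)"
  using hess_yy_symmetric[of z "matrix_inv (hess_yy g z) *v x" "matrix_inv (hess_yy g z) *v y"]
  by simp

lemma norm_hess_yy_diff_mult: "norm ((hess_yy g x - hess_yy g y) *v v) \<le> Qg * dist x y * norm v"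
  using norm_matrix_vector_mult_le_onorm[of "hess_yy g x - hess_yy g y" v] hyy_lip[of x y]
  by (meson mult_right_mono norm_ge_zero order_trans)

lemma norm_hess_xy_diff_mult: "norm ((hess_xy g x - hess_xy g y) *v v) \<le> Qg * dist x y * norm v"
  using norm_matrix_vector_mult_le_onorm[of "hess_xy g x - hess_xy g y" v] hxy_lip[of x y]
  by (meson mult_right_mono norm_ge_zero order_trans)

lemma norm_inv_hess_yy_diff_mult:
  "norm ((matrix_inv (hess_yy g x) - matrix_inv (hess_yy g y)) *v c) \<le> Qg / \<mu>\<^sup>2 * dist x y * norm c"
proof -
  let ?Ix = "matrix_inv (hess_yy g x)" and ?Iy = "matrix_inv (hess_yy g y)"
  define u where "u = ?Iy *v c"
  \<comment> \<open>resolvent identity: inv Hx - inv Hy = inv Hx (Hy - Hx) inv Hy\<close>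
  have "(?Ix - ?Iy) *v c = ?Ix *v ((hess_yy g y - hess_yy g x) *v u)"
    by (simp add: u_def matrix_vector_mult_diff_distrib matrix_vector_mult_diff_rdistrib)
  then have "norm ((?Ix - ?Iy) *v c) \<le> norm ((hess_yy g y - hess_yy g x) *v u) / \<mu>"
    using norm_inv_hess_yy_mult_le by simp
  also have "\<dots> \<le> Qg * dist y x * norm u / \<mu>"
    using norm_hess_yy_diff_mult[of y x u] mu_pos by (simp add: divide_right_mono)
  also have "\<dots> \<le> Qg * dist y x * (norm c / \<mu>) / \<mu>"
    using norm_inv_hess_yy_mult_le[of y c] mu_pos hyy_lip[of x y] onorm_pos_le[OF
        matrix_vector_mul_bounded_linear[of "hess_yy g x - hess_yy g y"]]
    unfolding u_def
    by (intro divide_right_mono mult_left_mono) (auto simp: dist_commute intro: order_trans)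
  also have "\<dots> = Qg / \<mu>\<^sup>2 * dist x y * norm c"
    by (simp add: dist_commute power2_eq_square)
  finally show ?thesis .
qed

lemma Qg_dist_nonneg: "0 \<le> Qg * dist x y" for x y :: "(real^'n) \<times> (real^'p)"
  using onorm_pos_le[OF matrix_vector_mul_bounded_linear[of "hess_yy g x - hess_yy g y"]] hyy_lip[of x y]
  by simp

lemma norm_snd_hess_diff_Pair_0:
  "norm (snd (hess g x (a, 0)) - snd (hess g y (a, 0))) \<le> Qg * dist x y * norm a"
proof -
  define D where "D = snd (hess g x (a, 0)) - snd (hess g y (a, 0))"
  have "D \<bullet> D = ((hess_xy g x - hess_xy g y) *v D) \<bullet> a"
    by (simp add: D_def inner_hess_xy_mult inner_diff_left matrix_vector_mult_diff_rdistrib)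
  also have "\<dots> \<le> norm ((hess_xy g x - hess_xy g y) *v D) * norm a"
    by (rule norm_cauchy_schwarz)
  also have "\<dots> \<le> Qg * dist x y * norm D * norm a"
    using norm_hess_xy_diff_mult[of x y D] by (simp add: mult_right_mono)
  finally have "norm D * norm D \<le> norm D * (Qg * dist x y * norm a)"
    by (simp add: dot_square_norm power2_eq_square mult_ac)
  then show ?thesis
    using Qg_dist_nonneg[of x y] unfolding D_def[symmetric]
    by (cases "D = 0") (simp_all add: mult_le_cancel_left)
qed

lemma onorm_snd_hess_diff_le:
  "onorm (\<lambda>h. snd (hess g x h) - snd (hess g y h)) \<le> 2 * Qg * dist x y"
proof (rule onorm_le)
  fix h :: "(real^'n) \<times> (real^'p)"
  obtain a b where h: "h = (a, b)" by fastforce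
  have "snd (hess g x h) - snd (hess g y h)
      = (snd (hess g x (a, 0)) - snd (hess g y (a, 0))) + (hess_yy g x - hess_yy g y) *v b"
    by (simp add: h snd_hess_Pair[of x a b] snd_hess_Pair[of y a b] matrix_vector_mult_diff_rdistrib)
  then have "norm (snd (hess g x h) - snd (hess g y h)) \<le> Qg * dist x y * norm a + Qg * dist x y * norm b"
    using norm_triangle_le[OF add_mono[OF norm_snd_hess_diff_Pair_0 norm_hess_yy_diff_mult]] by simp
  also have "\<dots> \<le> Qg * dist x y * norm h + Qg * dist x y * norm h"
    using Qg_dist_nonneg[of x y] by (intro add_mono mult_left_mono) (auto simp: h norm_Pair)
  finally show "norm (snd (hess g x h) - snd (hess g y h)) \<le> 2 * Qg * dist x y * norm h"
    by (simp add: algebra_simps)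
qed

lemma has_derivative_grad_y: "(grad_y g has_derivative (\<lambda>h. snd (hess g z h))) (at z)"
proof -
  have "grad_y g = (\<lambda>w. snd (grad g w))"
    by (simp add: fun_eq_iff grad_y_def)
  then show ?thesis
    using has_derivative_snd[OF has_derivative_hess[OF g_twice]] by simp
qed

lemma strict_dir_deriv_grad_y: "strict_dir_deriv (grad_y g) z v (snd (hess g z v))"
  by (rule strict_dir_deriv_if_derivative_lipschitz[OF has_derivative_grad_y onorm_snd_hess_diff_le])

lemma isCont_grad_y: "isCont (grad_y g) z"
proof -
  have "dist (grad_y g a) (grad_y g b) \<le> Lg * dist a b" for a b
    using dist_snd_le[of "grad g a" "grad g b"] lipschitz_onD[OF grad_lip, of a b]
    by (simp add: grad_y_def)
  then have "Lg-lipschitz_on UNIV (grad_y g)"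
    by (intro lipschitz_onI lipschitz_on_nonneg[OF grad_lip])
  then have "continuous_on UNIV (grad_y g)"
    by (rule lipschitz_on_continuous_on)
  then show ?thesis
    by (simp add: continuous_on_eq_continuous_at del: split_paired_All)
qed

lemma strict_dir_deriv_A_map:
  assumes z: "grad_y g z = 0"
  shows "strict_dir_deriv (A_map g) z v (- (matrix_inv (hess_yy g z) *v snd (hess g z (fst v, 0))))"
proof -
  let ?I = "\<lambda>w. matrix_inv (hess_yy g w)"
  have "norm (?I w *v y) \<le> 1 / \<mu> * norm y" for w y
    using norm_inv_hess_yy_mult_le[of w y] by simp
  from strict_dir_deriv_matrix_mult_vanishing[OF strict_dir_deriv_grad_y isCont_grad_y z
      norm_inv_hess_yy_diff_mult this]
  have "strict_dir_deriv (\<lambda>w. ?I w *v grad_y g w) z v (?I z *v snd (hess g z v))" .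
  from strict_dir_deriv_diff[OF strict_dir_deriv_linear[OF bounded_linear.linear[OF bounded_linear_snd]]
      this]
  have "strict_dir_deriv (\<lambda>w. snd w - ?I w *v grad_y g w) z v (snd v - ?I z *v snd (hess g z v))" .
  moreover have "snd v - ?I z *v snd (hess g z v) = - (?I z *v snd (hess g z (fst v, 0)))"
    using snd_hess_Pair[of z "fst v" "snd v"] by (simp add: matrix_vector_right_distrib)
  ultimately show ?thesis
    by (simp add: A_map_def[abs_def])
qed

lemma isCont_A_map:
  assumes z: "grad_y g z = 0"
  shows "isCont (A_map g) z"
proof -
  have "((\<lambda>w. matrix_inv (hess_yy g w) *v grad_y g w) \<longlongrightarrow> 0) (at z)"
  proof (rule tendsto_0_le[where K = "1 / \<mu>"])
    show "(grad_y g \<longlongrightarrow> 0) (at z)"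
      using isCont_grad_y[of z] z by (simp add: isCont_def)
    show "eventually (\<lambda>w. norm (matrix_inv (hess_yy g w) *v grad_y g w) \<le> norm (grad_y g w) * (1 / \<mu>))
            (at z)"
      using norm_inv_hess_yy_mult_le by (simp add: always_eventually)
  qed
  then have "((\<lambda>w. snd w - matrix_inv (hess_yy g w) *v grad_y g w) \<longlongrightarrow> snd z - 0) (at z)"
    by (intro tendsto_intros)
  then show ?thesis
    using z by (simp add: isCont_def A_map_def[abs_def])
qed

(* The derivative of (x, y) |-> (x, A(x, y)) at points of M. There it is the derivative of
   x |-> (x, y*(x)), y*(x) the lower-level solution, applied to the x-part of v. *)
definition implicit_jacobian ::
    "(real^'n) \<times> (real^'p) \<Rightarrow> (real^'n) \<times> (real^'p) \<Rightarrow> (real^'n) \<times> (real^'p)" where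
  "implicit_jacobian z v = (fst v, - (matrix_inv (hess_yy g z) *v snd (hess g z (fst v, 0))))"

lemma linear_implicit_jacobian: "linear (implicit_jacobian z)"
  by (rule linearI)
    (simp_all add: implicit_jacobian_def linear_add[OF linear_snd_hess_Pair(2)]
      linear_scale[OF linear_snd_hess_Pair(2)] matrix_vector_right_distrib matrix_vector_mult_scaleR)

lemma inner_implicit_jacobian:
  "d \<bullet> implicit_jacobian z v = (fst d - hess_xy g z *v (matrix_inv (hess_yy g z) *v snd d)) \<bullet> fst v"
proof -
  let ?I = "matrix_inv (hess_yy g z)" and ?P = "snd (hess g z (fst v, 0))"
  have "snd d \<bullet> (?I *v ?P) = ?P \<bullet> (?I *v snd d)"
    by (simp add: inv_hess_yy_symmetric[symmetric] inner_commute)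
  also have "\<dots> = (hess_xy g z *v (?I *v snd d)) \<bullet> fst v"
    by (simp add: inner_hess_xy_mult)
  finally have "snd d \<bullet> (?I *v ?P) = (hess_xy g z *v (?I *v snd d)) \<bullet> fst v" .
  then show ?thesis
    by (cases d) (simp add: implicit_jacobian_def inner_diff_left)
qed

lemma strict_dir_deriv_implicit_jacobian:
  assumes "grad_y g z = 0"
  shows "strict_dir_deriv (\<lambda>w. (fst w, A_map g w)) z v (implicit_jacobian z v)"
  unfolding implicit_jacobian_def
  by (intro strict_dir_deriv_Pair strict_dir_deriv_A_map[OF assms]
      strict_dir_deriv_linear[OF bounded_linear.linear[OF bounded_linear_fst]])

lemma A_map_eq_snd: "grad_y g z = 0 \<Longrightarrow> A_map g z = snd z"
  by (simp add: A_map_def)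

lemma h_fun_eq_comp_add:
  "h_fun f g \<beta> = (\<lambda>w. f (fst w, A_map g w) + \<beta> / 2 * (norm (grad_y g w))\<^sup>2)"
  by (simp add: fun_eq_iff h_fun_def)

lemma clarke_dd_h_fun_le:
  assumes z: "z \<in> M_set g" and lip: "M-lipschitz_on UNIV f"
  shows "clarke_dd (h_fun f g \<beta>) z v \<le> clarke_dd f z (implicit_jacobian z v)"
proof -
  have z0: "grad_y g z = 0"
    using z by (simp add: M_set_def)
  have "isCont (\<lambda>w. (fst w, A_map g w)) z"
    by (intro isCont_Pair isCont_fst isCont_A_map[OF z0] continuous_ident)
  from clarke_dd_comp_add_le[OF lip this strict_dir_deriv_implicit_jacobian[OF z0]
      strict_dir_deriv_scaled_norm_square_vanishing[OF strict_dir_deriv_grad_y isCont_grad_y z0,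
        where c = "\<beta> / 2"]]
  show ?thesis
    by (simp add: h_fun_eq_comp_add A_map_eq_snd[OF z0])
qed

lemma clarke_dd_h_fun_ge_if_regular:
  assumes z: "z \<in> M_set g" and lip: "M-lipschitz_on UNIV f" and reg: "clarke_regular_at f z"
  shows "clarke_dd f z (implicit_jacobian z v) \<le> clarke_dd (h_fun f g \<beta>) z v"
proof -
  have z0: "grad_y g z = 0"
    using z by (simp add: M_set_def)
  have "clarke_regular_at f (fst z, A_map g z)"
    using reg by (simp add: A_map_eq_snd[OF z0])
  from clarke_dd_comp_add_ge_if_regular[OF lip this strict_dir_deriv_implicit_jacobian[OF z0]
      strict_dir_deriv_scaled_norm_square_vanishing[OF strict_dir_deriv_grad_y isCont_grad_y z0,
        where c = "\<beta> / 2"]]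
  show ?thesis
    by (simp add: h_fun_eq_comp_add A_map_eq_snd[OF z0])
qed

lemma CDB_stationary_imp_BLO_stationary:
  assumes z: "z \<in> M_set g" and lip: "M-lipschitz_on UNIV f" and cdb: "CDB_stationary f g \<beta> z"
  shows "BLO_stationary f g z"
proof -
  have "0 \<le> clarke_dd f z (implicit_jacobian z u)" for u
  proof -
    have "ereal (0 \<bullet> u) \<le> clarke_dd (h_fun f g \<beta>) z u"
      using cdb unfolding CDB_stationary_def clarke_subdiff_def by blast
    also have "\<dots> \<le> clarke_dd f z (implicit_jacobian z u)"
      by (rule clarke_dd_h_fun_le[OF z lip])
    finally show ?thesis by (simp add: zero_ereal_def)
  qed
  from clarke_subgradient_orthogonal_to_range[OF lip linear_implicit_jacobian this]
  obtain \<xi> where \<xi>: "\<xi> \<in> clarke_subdiff f z" "\<And>u. \<xi> \<bullet> implicit_jacobian z u = 0"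
    by blast
  define r where "r = fst \<xi> - hess_xy g z *v (matrix_inv (hess_yy g z) *v snd \<xi>)"
  have "r \<bullet> r = 0"
    using \<xi>(2)[of "(r, 0)"] by (simp add: inner_implicit_jacobian r_def)
  with \<xi>(1) z show ?thesis
    by (auto simp: BLO_stationary_def M_set_def r_def)
qed

lemma BLO_stationary_imp_CDB_stationary:
  assumes z: "z \<in> M_set g" and lip: "M-lipschitz_on UNIV f" and reg: "clarke_regular_at f z"
    and blo: "BLO_stationary f g z"
  shows "CDB_stationary f g \<beta> z"
proof -
  obtain d where d: "d \<in> clarke_subdiff f z"
    and r: "fst d - hess_xy g z *v (matrix_inv (hess_yy g z) *v snd d) = 0"
    using blo by (auto simp: BLO_stationary_def)
  have "ereal (0 \<bullet> v) \<le> clarke_dd (h_fun f g \<beta>) z v" for v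
  proof -
    have "ereal (0 \<bullet> v) = ereal (d \<bullet> implicit_jacobian z v)"
      by (simp add: inner_implicit_jacobian r)
    also have "\<dots> \<le> clarke_dd f z (implicit_jacobian z v)"
      using d unfolding clarke_subdiff_def by blast
    also have "\<dots> \<le> clarke_dd (h_fun f g \<beta>) z v"
      by (rule clarke_dd_h_fun_ge_if_regular[OF z lip reg])
    finally show ?thesis .
  qed
  then show ?thesis
    by (simp add: CDB_stationary_def clarke_subdiff_def)
qed

end

theorem proposition3p2:
  fixes f g :: "(real^'n) \<times> (real^'p) \<Rightarrow> real"
    and Df :: "(real^'n) \<times> (real^'p) \<Rightarrow> ((real^'n) \<times> (real^'p)) set"
    and Mf \<mu> Lg Qg \<beta> :: real
  assumes consts_pos: "Mf > 0" "\<mu> > 0" "Lg > 0" "Qg > 0"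
    and f_lip: "Mf-lipschitz_on UNIV f"
    and g_diff: "\<And>z. g differentiable (at z)"
    and g_twice: "\<And>z. grad g differentiable (at z)"
    and g_strong: "\<And>z v. v \<bullet> (hess_yy g z *v v) \<ge> \<mu> * (norm v)\<^sup>2"
    and grad_lip: "Lg-lipschitz_on UNIV (grad g)"
    and hyy_lip: "\<And>z w. onorm (\<lambda>v. (hess_yy g z - hess_yy g w) *v v) \<le> Qg * dist z w"
    and hxy_lip: "\<And>z w. onorm (\<lambda>v. (hess_xy g z - hess_xy g w) *v v) \<le> Qg * dist z w"
    and hyy_C1: "\<exists>D. (\<forall>z. (hess_yy g has_derivative blinfun_apply (D z)) (at z))
                     \<and> continuous_on UNIV D"
    and Df_cons: "conservative_potential Df f"
    and Df_vals: "\<And>z. convex (Df z) \<and> (\<forall>v\<in>Df z. norm v \<le> Mf)"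
    and beta_pos: "\<beta> > 0"
  shows "(\<forall>z \<in> M_set g. CDB_stationary f g \<beta> z \<longrightarrow> BLO_stationary f g z)
       \<and> (clarke_regular f \<longrightarrow>
            (\<forall>z \<in> M_set g. BLO_stationary f g z \<longleftrightarrow> CDB_stationary f g \<beta> z))"
proof -
  interpret strongly_convex_lower_level g \<mu> Lg Qg
    using consts_pos(2) g_diff g_twice g_strong grad_lip hyy_lip hxy_lip
    by unfold_locales
  show ?thesis
    using CDB_stationary_imp_BLO_stationary[OF _ f_lip] BLO_stationary_imp_CDB_stationary[OF _ f_lip]
    by (auto simp: clarke_regular_def)
qed

end
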